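(* Let $H$ be a non-transitive tournament with $6$ vertices. If $H$ contains twins or has a non-trivial automorphism, then $H$ is not quasirandom-forcing.
   Context: A tournament is an orientation of a complete graph; $\mathrm{Aut}(H)$ is its automorphism group. Two vertices $u,v$ of a tournament are twins if every out-neighbor of $u$, possibly except $v$, is an out-neighbor of $v$, and every out-neighbor of $v$, possibly except $u$, is an out-neighbor of $u$. For tournaments $H,G$, $d(H,G)$ is the probability that $\lvert H\rvert$ uniformly random distinct vertices of $G$ induce a tournament isomorphic to $H$ (and $0$ if $\lvert H\rvert>\lvert G\rvert$). A sequence $(G_n)$ of tournaments with $\lvert G_n\rvert\to\infty$ is quasirandom if $\lim_{n\to\infty} d(F,G_n)=\frac{m!}{\lvert\mathrm{Aut}(F)\rvert}2^{-\binom{m}{2}}$ for every tournament $F$ with $m$ vertices. A $k$-vertex tournament $H$ is quasirandom-forcing if every sequence $(G_n)$ of tournaments with $\lvert G_n\rvert\to\infty$ and $\lim_{n\to\infty} d(H,G_n)=\frac{k!}{\lvert\mathrm{Aut}(H)\rvert}2^{-\binom{k}{2}}$ is quasirandom. *)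

theory Defs
  imports Complex_Main "HOL-Combinatorics.Permutations"
begin

text \<open>A tournament on the vertex set {0..<n} is given by its size n and an arc relation E
  (E i j means i \<rightarrow> j); only the values of E on {0..<n} matter.\<close>

definition tournament :: "nat \<Rightarrow> (nat \<Rightarrow> nat \<Rightarrow> bool) \<Rightarrow> bool" where
  "tournament n E \<longleftrightarrow>
     (\<forall>i<n. \<not> E i i) \<and> (\<forall>i<n. \<forall>j<n. i \<noteq> j \<longrightarrow> (E i j \<longleftrightarrow> \<not> E j i))"

definition transitive_tournament :: "nat \<Rightarrow> (nat \<Rightarrow> nat \<Rightarrow> bool) \<Rightarrow> bool" where
  "transitive_tournament n E \<longleftrightarrow>
     (\<forall>i<n. \<forall>j<n. \<forall>l<n. E i j \<and> E j l \<longrightarrow> E i l)"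

definition automorphisms :: "nat \<Rightarrow> (nat \<Rightarrow> nat \<Rightarrow> bool) \<Rightarrow> (nat \<Rightarrow> nat) set" where
  "automorphisms n E =
     {p. p permutes {0..<n} \<and> (\<forall>i<n. \<forall>j<n. E i j \<longleftrightarrow> E (p i) (p j))}"

definition has_nontrivial_automorphism :: "nat \<Rightarrow> (nat \<Rightarrow> nat \<Rightarrow> bool) \<Rightarrow> bool" where
  "has_nontrivial_automorphism n E \<longleftrightarrow> (\<exists>p\<in>automorphisms n E. p \<noteq> id)"

definition twins :: "nat \<Rightarrow> (nat \<Rightarrow> nat \<Rightarrow> bool) \<Rightarrow> nat \<Rightarrow> nat \<Rightarrow> bool" where
  "twins n E u v \<longleftrightarrow> u < n \<and> v < n \<and> u \<noteq> v \<and>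
     (\<forall>w<n. w \<noteq> v \<and> E u w \<longrightarrow> E v w) \<and>
     (\<forall>w<n. w \<noteq> u \<and> E v w \<longrightarrow> E u w)"

definition has_twins :: "nat \<Rightarrow> (nat \<Rightarrow> nat \<Rightarrow> bool) \<Rightarrow> bool" where
  "has_twins n E \<longleftrightarrow> (\<exists>u v. twins n E u v)"

definition induces_copy ::
  "nat \<Rightarrow> (nat \<Rightarrow> nat \<Rightarrow> bool) \<Rightarrow> (nat \<Rightarrow> nat \<Rightarrow> bool) \<Rightarrow> nat set \<Rightarrow> bool" where
  "induces_copy k H G S \<longleftrightarrow>
     (\<exists>f. bij_betw f {0..<k} S \<and> (\<forall>i<k. \<forall>j<k. H i j \<longleftrightarrow> G (f i) (f j)))"

text \<open>d(H,G): probability that k = |H| uniformly random distinct vertices of G induce a copy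
  of H; equals (number of k-subsets inducing H) / (n choose k), and is 0 when k > n.\<close>
definition density ::
  "nat \<Rightarrow> (nat \<Rightarrow> nat \<Rightarrow> bool) \<Rightarrow> nat \<Rightarrow> (nat \<Rightarrow> nat \<Rightarrow> bool) \<Rightarrow> real" where
  "density k H n G =
     (if k > n then 0 else
      real (card {S. S \<subseteq> {0..<n} \<and> card S = k \<and> induces_copy k H G S}) / real (n choose k))"

definition random_density :: "nat \<Rightarrow> (nat \<Rightarrow> nat \<Rightarrow> bool) \<Rightarrow> real" where
  "random_density m F = fact m / real (card (automorphisms m F)) * (1/2) ^ (m choose 2)"

definition quasirandom :: "(nat \<Rightarrow> nat \<times> (nat \<Rightarrow> nat \<Rightarrow> bool)) \<Rightarrow> bool" where
  "quasirandom Gs \<longleftrightarrow>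
     (\<forall>i. tournament (fst (Gs i)) (snd (Gs i))) \<and>
     filterlim (\<lambda>i. fst (Gs i)) at_top sequentially \<and>
     (\<forall>m F. tournament m F \<longrightarrow>
        (\<lambda>i. density m F (fst (Gs i)) (snd (Gs i))) \<longlonglongrightarrow> random_density m F)"

definition quasirandom_forcing :: "nat \<Rightarrow> (nat \<Rightarrow> nat \<Rightarrow> bool) \<Rightarrow> bool" where
  "quasirandom_forcing k H \<longleftrightarrow>
     (\<forall>Gs. (\<forall>i. tournament (fst (Gs i)) (snd (Gs i))) \<and>
           filterlim (\<lambda>i. fst (Gs i)) at_top sequentially \<and>
           (\<lambda>i. density k H (fst (Gs i)) (snd (Gs i))) \<longlonglongrightarrow> random_density k H
           \<longrightarrow> quasirandom Gs)"

end

theory Submission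
  imports Defs "HOL-Library.Infinite_Set"
begin

(* Suppose H were quasirandom-forcing, and let p = 6! 2^-15 / |Aut H| be its density in a random
   tournament. Blowing H up into six transitive parts of size about n/6 gives an n-vertex tournament
   with H-density about 6!/6^6 > 6! 2^-16, which is at least p when H has a nontrivial automorphism;
   if H has twins, merging their two parts into one transitive part roughly doubles the count and
   beats 6! 2^-15 >= p. Now replace, vertex by vertex, all arcs at the vertices >= t by the transitive
   order: the H-density changes by at most 6/n per step and ends at 0 because H is not transitive, so
   some intermediate tournament has H-density within 6/n of p. These tournaments form a sequence whose
   H-density tends to p, which would therefore be quasirandom; but each of them keeps a transitive
   subtournament on its first n/6 vertices, which forces the density of the transitive tournament on
   16 vertices to be at least 16!/112^16, more than its random density 16!/2^120. *)

section \<open>Copies and densities\<close>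

lemma tournament_irrefl: "tournament k H \<Longrightarrow> i < k \<Longrightarrow> \<not> H i i"
  unfolding tournament_def by blast

lemma tournament_flip: "tournament k H \<Longrightarrow> i < k \<Longrightarrow> j < k \<Longrightarrow> i \<noteq> j \<Longrightarrow> H i j \<longleftrightarrow> \<not> H j i"
  unfolding tournament_def by blast

definition copies :: "nat \<Rightarrow> (nat \<Rightarrow> nat \<Rightarrow> bool) \<Rightarrow> nat \<Rightarrow> (nat \<Rightarrow> nat \<Rightarrow> bool) \<Rightarrow> nat set set" where
  "copies k H n G = {S. S \<subseteq> {0..<n} \<and> card S = k \<and> induces_copy k H G S}"

lemma finite_copies: "finite (copies k H n G)"
  unfolding copies_def by (rule finite_subset[of _ "Pow {0..<n}"]) auto

lemma density_eq_card_copies: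
  "k \<le> n \<Longrightarrow> density k H n G = real (card (copies k H n G)) / real (n choose k)"
  by (simp add: density_def copies_def)

lemma density_ge_card_copies:
  assumes "K \<le> card (copies k H n G)" and "k \<le> n"
  shows "fact k * real K / real n ^ k \<le> density k H n G"
proof -
  have pos: "real (n choose k) * fact k > 0"
    using assms(2) by simp
  have le: "real (n choose k) * fact k \<le> real n ^ k"
    using binomial_fact_pow[of n k] by (metis of_nat_fact of_nat_le_iff of_nat_mult of_nat_power)
  then have "fact k * real K / real n ^ k \<le> fact k * real K / (real (n choose k) * fact k)"
    using pos assms(2) by (intro divide_left_mono mult_pos_pos) auto
  also have "\<dots> \<le> real (card (copies k H n G)) / real (n choose k)"
    using assms(1) pos by (simp add: divide_right_mono)
  finally show ?thesis
    using assms(2) by (simp add: density_eq_card_copies)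
qed

lemma induces_copy_cong:
  assumes "\<And>x y. x \<in> S \<Longrightarrow> y \<in> S \<Longrightarrow> G x y = G' x y"
  shows "induces_copy k H G S = induces_copy k H G' S"
proof -
  have "(\<forall>i<k. \<forall>j<k. H i j = G (f i) (f j)) \<longleftrightarrow> (\<forall>i<k. \<forall>j<k. H i j = G' (f i) (f j))"
    if "bij_betw f {0..<k} S" for f
    using assms bij_betwE[OF that] by auto
  then show ?thesis
    unfolding induces_copy_def by blast
qed

lemma copies_cong:
  assumes "\<And>x y. x < n \<Longrightarrow> y < n \<Longrightarrow> G x y = G' x y"
  shows "copies k H n G = copies k H n G'"
proof -
  have "induces_copy k H G S = induces_copy k H G' S" if "S \<subseteq> {0..<n}" for S
    using that by (intro induces_copy_cong assms) auto
  then show ?thesis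
    unfolding copies_def by blast
qed

lemma copies_relabel_subset:
  assumes "\<sigma> permutes {0..<k}"
  shows "copies k (\<lambda>i j. H (\<sigma> i) (\<sigma> j)) n G \<subseteq> copies k H n G"
proof
  fix S assume S: "S \<in> copies k (\<lambda>i j. H (\<sigma> i) (\<sigma> j)) n G"
  then obtain f where f: "bij_betw f {0..<k} S" and emb: "\<forall>i<k. \<forall>j<k. H (\<sigma> i) (\<sigma> j) = G (f i) (f j)"
    unfolding copies_def induces_copy_def by blast
  have inv: "bij_betw (inv \<sigma>) {0..<k} {0..<k}"
    using assms by (rule permutes_imp_bij[OF permutes_inv])
  have "H i j = G (f (inv \<sigma> i)) (f (inv \<sigma> j))" if "i < k" "j < k" for i j
  proof -
    have inv_lt: "inv \<sigma> i < k" "inv \<sigma> j < k"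
      using bij_betwE[OF inv] that by auto
    show ?thesis
      using emb[rule_format, OF inv_lt] permutes_inverses(1)[OF assms] by simp
  qed
  then have "induces_copy k H G S"
    unfolding induces_copy_def using bij_betw_trans[OF inv f] by (metis comp_apply)
  then show "S \<in> copies k H n G"
    using S by (simp add: copies_def)
qed

lemma copies_relabel:
  assumes "\<sigma> permutes {0..<k}"
  shows "copies k (\<lambda>i j. H (\<sigma> i) (\<sigma> j)) n G = copies k H n G"
proof
  have "copies k H n G = copies k (\<lambda>i j. H (\<sigma> (inv \<sigma> i)) (\<sigma> (inv \<sigma> j))) n G"
    using permutes_inverses(1)[OF assms] by simp
  also have "\<dots> \<subseteq> copies k (\<lambda>i j. H (\<sigma> i) (\<sigma> j)) n G"
    using copies_relabel_subset[OF permutes_inv[OF assms], of "\<lambda>i j. H (\<sigma> i) (\<sigma> j)"] by simp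
  finally show "copies k H n G \<subseteq> copies k (\<lambda>i j. H (\<sigma> i) (\<sigma> j)) n G" .
qed (rule copies_relabel_subset[OF assms])

lemma strict_mono_on_image_inj:
  fixes f g :: "nat \<Rightarrow> 'a::linorder"
  assumes "strict_mono_on {0..<k} f" "strict_mono_on {0..<k} g" "f ` {0..<k} = g ` {0..<k}"
    and "f \<in> extensional {0..<k}" "g \<in> extensional {0..<k}"
  shows "f = g"
proof -
  have sorted: "sorted_wrt (<) (map h [0..<k])" if "strict_mono_on {0..<k} h" for h :: "nat \<Rightarrow> 'a"
    using that by (auto simp: sorted_wrt_map sorted_wrt_iff_nth_less strict_mono_on_def)
  have "map f [0..<k] = map g [0..<k]"
    using strict_sorted_equal[OF sorted[OF assms(1)] sorted[OF assms(2)]] assms(3) by simp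
  then show ?thesis
    using assms(4,5) by (intro extensionalityI) (auto simp: map_eq_conv)
qed

lemma card_strict_mono_embeddings_le_card_copies:
  assumes ext: "F \<subseteq> extensional {0..<k}"
    and emb: "\<And>f. f \<in> F \<Longrightarrow> strict_mono_on {0..<k} f \<and> f ` {0..<k} \<subseteq> {0..<n} \<and>
                          (\<forall>i<k. \<forall>j<k. H i j = G (f i) (f j))"
  shows "card F \<le> card (copies k H n G)"
proof -
  have "inj_on (\<lambda>f. f ` {0..<k}) F"
  proof (rule inj_onI)
    fix f g assume "f \<in> F" "g \<in> F" "f ` {0..<k} = g ` {0..<k}"
    with ext emb show "f = g"
      by (intro strict_mono_on_image_inj) auto
  qed
  then have "card F = card ((\<lambda>f. f ` {0..<k}) ` F)"
    by (simp add: card_image)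
  also have "\<dots> \<le> card (copies k H n G)"
  proof (intro card_mono[OF finite_copies] image_subsetI)
    fix f assume "f \<in> F"
    then have mono: "strict_mono_on {0..<k} f" and "f ` {0..<k} \<subseteq> {0..<n}"
      and "\<forall>i<k. \<forall>j<k. H i j = G (f i) (f j)"
      using emb by blast+
    moreover have "inj_on f {0..<k}"
      using mono by (rule strict_mono_on_imp_inj_on)
    ultimately show "f ` {0..<k} \<in> copies k H n G"
      unfolding copies_def induces_copy_def by (auto simp: card_image intro!: exI[of _ f] inj_on_imp_bij_betw)
  qed
  finally show ?thesis .
qed

section \<open>Changing the arcs at one vertex\<close>

lemma card_subsets_containing_le:
  assumes "t < n"
  shows "card {S. S \<subseteq> {0..<n} \<and> card S = Suc k \<and> t \<in> S} \<le> (n - 1) choose k"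
proof -
  have "{S. S \<subseteq> {0..<n} \<and> card S = Suc k \<and> t \<in> S} \<subseteq> insert t ` {S. S \<subseteq> {0..<n} - {t} \<and> card S = k}"
  proof
    fix S assume S: "S \<in> {S. S \<subseteq> {0..<n} \<and> card S = Suc k \<and> t \<in> S}"
    then have "finite S"
      using finite_subset by blast
    with S have "S = insert t (S - {t})" "card (S - {t}) = k"
      by auto
    with S show "S \<in> insert t ` {S. S \<subseteq> {0..<n} - {t} \<and> card S = k}"
      by blast
  qed
  then have "card {S. S \<subseteq> {0..<n} \<and> card S = Suc k \<and> t \<in> S}
      \<le> card (insert t ` {S. S \<subseteq> {0..<n} - {t} \<and> card S = k})"
    by (intro card_mono) auto
  also have "\<dots> \<le> card {S. S \<subseteq> {0..<n} - {t} \<and> card S = k}"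
    by (rule card_image_le) auto
  also have "\<dots> = (n - 1) choose k"
    using assms by (simp add: n_subsets)
  finally show ?thesis .
qed

lemma binomial_ratio_pred:
  assumes "0 < k" "k \<le> n"
  shows "real ((n - 1) choose (k - 1)) / real (n choose k) = real k / real n"
proof -
  obtain m j where n: "n = Suc m" and k: "k = Suc j"
    using assms by (metis Suc_pred le0 less_le_trans)
  have "real (Suc m) * real (m choose j) = real (Suc m choose Suc j) * real (Suc j)"
    using Suc_times_binomial_eq[of m j] by (metis of_nat_mult)
  moreover have "real (Suc m choose Suc j) > 0"
    using assms unfolding n k by (metis of_nat_0_less_iff zero_less_binomial_iff)
  ultimately show ?thesis
    by (simp add: n k field_simps)
qed

lemma density_diff_le_if_agree_off:
  assumes "t < n" "k \<le> n" "0 < k"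
    and agree: "\<And>x y. x \<noteq> t \<Longrightarrow> y \<noteq> t \<Longrightarrow> G x y = G' x y"
  shows "\<bar>density k H n G - density k H n G'\<bar> \<le> k / n"
proof -
  define Z where "Z = {S. S \<subseteq> {0..<n} \<and> card S = k \<and> t \<in> S}"
  have "finite Z"
    unfolding Z_def by (rule finite_subset[of _ "Pow {0..<n}"]) auto
  have card_le: "card (copies k H n G1) \<le> card (copies k H n G2) + card Z"
    if agree12: "\<And>x y. x \<noteq> t \<Longrightarrow> y \<noteq> t \<Longrightarrow> G1 x y = G2 x y" for G1 G2
  proof -
    have "copies k H n G1 \<subseteq> copies k H n G2 \<union> Z"
    proof
      fix S assume S: "S \<in> copies k H n G1"
      show "S \<in> copies k H n G2 \<union> Z"
      proof (cases "t \<in> S")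
        case False
        then have "induces_copy k H G1 S = induces_copy k H G2 S"
          by (intro induces_copy_cong agree12) auto
        with S show ?thesis
          by (simp add: copies_def)
      qed (use S in \<open>simp add: copies_def Z_def\<close>)
    qed
    then have "card (copies k H n G1) \<le> card (copies k H n G2 \<union> Z)"
      using \<open>finite Z\<close> finite_copies by (intro card_mono) auto
    also have "\<dots> \<le> card (copies k H n G2) + card Z"
      by (rule card_Un_le)
    finally show ?thesis .
  qed
  have "card Z \<le> (n - 1) choose (k - 1)"
    using card_subsets_containing_le[OF \<open>t < n\<close>, of "k - 1"] \<open>0 < k\<close> by (simp add: Z_def)
  with card_le[OF agree] card_le[of G' G] agree
  have "\<bar>real (card (copies k H n G)) - real (card (copies k H n G'))\<bar> \<le> real ((n - 1) choose (k - 1))"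
    by fastforce
  moreover have pos: "real (n choose k) > 0"
    using assms by simp
  ultimately have "\<bar>density k H n G - density k H n G'\<bar> \<le> real ((n - 1) choose (k - 1)) / real (n choose k)"
    using assms(2) by (simp add: density_eq_card_copies abs_divide divide_right_mono flip: diff_divide_distrib)
  also have "\<dots> = k / n"
    by (rule binomial_ratio_pred[OF \<open>0 < k\<close> \<open>k \<le> n\<close>])
  finally show ?thesis .
qed

section \<open>Interpolating towards a transitive tournament\<close>

lemma discrete_intermediate_value:
  fixes d :: "nat \<Rightarrow> real"
  assumes "d 0 < p" "p \<le> d N" and steps: "\<And>t. t < N \<Longrightarrow> \<bar>d (Suc t) - d t\<bar> \<le> \<delta>"
  shows "\<exists>t\<le>N. \<bar>d t - p\<bar> \<le> \<delta>"
proof -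
  define t where "t = (LEAST t. p \<le> d t)"
  have "p \<le> d t" "t \<le> N"
    unfolding t_def using assms(2) by (rule LeastI, rule Least_le)
  moreover obtain s where s: "t = Suc s"
    using \<open>p \<le> d t\<close> assms(1) by (cases t) auto
  moreover have "d s < p"
    using not_less_Least[of s "\<lambda>t. p \<le> d t"] s unfolding t_def by auto
  ultimately show ?thesis
    using steps[of s] by (intro exI[of _ t]) auto
qed

definition ordered_prefix :: "nat \<Rightarrow> (nat \<Rightarrow> nat \<Rightarrow> bool) \<Rightarrow> bool" where
  "ordered_prefix a G \<longleftrightarrow> (\<forall>x<a. \<forall>y<a. G x y \<longleftrightarrow> x < y)"

definition order_after :: "nat \<Rightarrow> (nat \<Rightarrow> nat \<Rightarrow> bool) \<Rightarrow> nat \<Rightarrow> nat \<Rightarrow> bool" where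
  "order_after t B x y \<longleftrightarrow> (if x < t \<and> y < t then B x y else x < y)"

lemma tournament_order_after:
  assumes "tournament n B"
  shows "tournament n (order_after t B)"
  unfolding tournament_def
proof (intro conjI allI impI)
  fix i j assume "i < n" "j < n" "i \<noteq> j"
  with tournament_flip[OF assms this] show "order_after t B i j \<longleftrightarrow> \<not> order_after t B j i"
    unfolding order_after_def by auto
qed (simp add: order_after_def tournament_irrefl[OF assms])

lemma ordered_prefix_order_after:
  "ordered_prefix a B \<Longrightarrow> ordered_prefix a (order_after t B)"
  unfolding ordered_prefix_def order_after_def by auto

lemma not_induces_copy_in_order:
  assumes "\<not> transitive_tournament k H"
  shows "\<not> induces_copy k H (\<lambda>x y. x < y) S"
proof
  assume "induces_copy k H (\<lambda>x y. x < y) S"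
  then obtain f :: "nat \<Rightarrow> nat" where f: "\<forall>i<k. \<forall>j<k. H i j = (f i < f j)"
    unfolding induces_copy_def by blast
  have "H i l" if "i < k" "j < k" "l < k" "H i j" "H j l" for i j l
    using f that less_trans[of "f i" "f j" "f l"] by simp
  then have "transitive_tournament k H"
    unfolding transitive_tournament_def by blast
  with assms show False ..
qed

lemma exists_density_near:
  assumes "\<not> transitive_tournament k H" "k \<le> n"
    and "tournament n B" "ordered_prefix a B" "0 < p" "p \<le> density k H n B"
  shows "\<exists>G. tournament n G \<and> ordered_prefix a G \<and> \<bar>density k H n G - p\<bar> \<le> k / n"
proof -
  define d where "d t = density k H n (order_after t B)" for t
  have "k \<noteq> 0"
    using assms(1) by (auto simp: transitive_tournament_def)
  have "order_after 0 B = (\<lambda>x y. x < y)"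
    by (simp add: order_after_def fun_eq_iff)
  then have "copies k H n (order_after 0 B) = {}"
    using not_induces_copy_in_order[OF assms(1)] by (simp add: copies_def)
  then have "d 0 < p"
    using assms(2,5) by (simp add: d_def density_eq_card_copies)
  moreover have "copies k H n (order_after n B) = copies k H n B"
    by (rule copies_cong) (simp add: order_after_def)
  then have "p \<le> d n"
    using assms(2,6) by (simp add: d_def density_eq_card_copies)
  moreover have "\<bar>d (Suc t) - d t\<bar> \<le> k / n" if "t < n" for t
    unfolding d_def using that assms(2) \<open>k \<noteq> 0\<close>
    by (intro density_diff_le_if_agree_off[of t]) (auto simp: order_after_def)
  ultimately obtain t where "\<bar>d t - p\<bar> \<le> k / n"
    using discrete_intermediate_value[of d p n] by blast
  then show ?thesis
    unfolding d_def using tournament_order_after[OF assms(3)] ordered_prefix_order_after[OF assms(4)]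
    by blast
qed

section \<open>Transitive prefixes obstruct quasirandomness\<close>

lemma subsets_of_ordered_prefix_in_copies:
  assumes "ordered_prefix a G" "a \<le> n"
  shows "{S. S \<subseteq> {0..<a} \<and> card S = m} \<subseteq> copies m (\<lambda>i j. i < j) n G"
proof
  fix S assume S: "S \<in> {S. S \<subseteq> {0..<a} \<and> card S = m}"
  then have "finite S"
    using finite_subset by blast
  then obtain h where h: "bij_betw h {..<m} S" and mono: "strict_mono_on {..<m} h"
    using S ex_bij_betw_strict_mono_card by blast
  have "(i < j) = G (h i) (h j)" if "i < m" "j < m" for i j
  proof -
    have "h i < a" "h j < a"
      using bij_betwE[OF h] that S by auto
    then show ?thesis
      using assms(1) strict_mono_on_less[OF mono] that by (simp add: ordered_prefix_def)
  qed
  then have "induces_copy m (\<lambda>i j. i < j) G S"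
    unfolding induces_copy_def using h by (auto simp: lessThan_atLeast0)
  with S assms(2) show "S \<in> copies m (\<lambda>i j. i < j) n G"
    by (auto simp: copies_def)
qed

lemma density_order_ge_of_ordered_prefix:
  assumes "ordered_prefix a G" "m \<le> a" "a \<le> n"
  shows "real (a choose m) / real (n choose m) \<le> density m (\<lambda>i j. i < j) n G"
proof -
  have "a choose m \<le> card (copies m (\<lambda>i j. i < j) n G)"
    using card_mono[OF finite_copies subsets_of_ordered_prefix_in_copies[OF assms(1,3)]]
    by (simp add: n_subsets)
  then show ?thesis
    using assms by (simp add: density_eq_card_copies divide_right_mono)
qed

lemma binomial_ratio_ge:
  assumes "m \<le> a" "a \<le> n" "real n \<le> c * real a" "0 < c"
  shows "fact m / (c * m) ^ m \<le> real (a choose m) / real (n choose m)"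
proof (cases "m = 0")
  case False
  have pos: "real (n choose m) > 0" "real n > 0"
    using assms False by auto
  have "fact m / (c * m) ^ m = fact m * (real n / (c * m)) ^ m / real n ^ m"
    using pos by (simp add: power_divide)
  also have "\<dots> \<le> fact m * (real a / m) ^ m / real n ^ m"
    using assms pos False by (intro divide_right_mono mult_left_mono power_mono) (auto simp: field_simps)
  also have "\<dots> \<le> fact m * real (a choose m) / (real (n choose m) * fact m)"
  proof (intro frac_le mult_left_mono)
    show "(real a / m) ^ m \<le> real (a choose m)"
      using binomial_ge_n_over_k_pow_k[OF assms(1)] by simp
    show "real (n choose m) * fact m \<le> real n ^ m"
      using binomial_fact_pow[of n m] by (metis of_nat_fact of_nat_le_iff of_nat_mult of_nat_power)
  qed (use pos in auto)
  finally show ?thesis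
    by simp
qed simp

lemma finite_automorphisms: "finite (automorphisms m F)"
  by (rule finite_subset[of _ "{p. p permutes {0..<m}}"])
     (auto simp: automorphisms_def intro: finite_permutations)

lemma card_automorphisms_pos: "0 < card (automorphisms m F)"
proof -
  have "id \<in> automorphisms m F"
    by (simp add: automorphisms_def)
  then show ?thesis
    using finite_automorphisms card_gt_0_iff by blast
qed

lemma card_automorphisms_ge_2:
  assumes "has_nontrivial_automorphism k H"
  shows "2 \<le> card (automorphisms k H)"
proof -
  obtain p where "p \<in> automorphisms k H" "p \<noteq> id"
    using assms unfolding has_nontrivial_automorphism_def by blast
  moreover have "id \<in> automorphisms k H"
    by (simp add: automorphisms_def)
  ultimately have "card {id, p} \<le> card (automorphisms k H)"
    by (intro card_mono finite_automorphisms) auto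
  with \<open>p \<noteq> id\<close> show ?thesis
    by simp
qed

lemma random_density_pos: "0 < random_density m F"
  using card_automorphisms_pos[of m F] by (simp add: random_density_def)

lemma random_density_le:
  assumes "0 < c" "c \<le> card (automorphisms m F)"
  shows "random_density m F \<le> fact m / (real c * 2 ^ (m choose 2))"
  using assms by (simp add: random_density_def power_one_over frac_le)

lemma random_density_order_16_lt: "random_density 16 (\<lambda>i j. i < j) < fact 16 / 112 ^ 16"
proof -
  have "random_density 16 (\<lambda>i j. i < j) \<le> fact 16 / (1 * 2 ^ 120)"
    using random_density_le[of 1 16 "\<lambda>i j. i < j"] card_automorphisms_pos[of 16 "\<lambda>i j. i < j"]
    by (simp add: choose_two Suc_le_eq)
  also have "\<dots> < fact 16 / 112 ^ 16"
    by (intro divide_strict_left_mono) auto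
  finally show ?thesis .
qed

lemma not_quasirandom_if_ordered_prefix:
  assumes "\<And>i. ordered_prefix (fst (Gs i) div 6) (snd (Gs i))"
    and "filterlim (\<lambda>i. fst (Gs i)) at_top sequentially"
  shows "\<not> quasirandom Gs"
proof
  assume "quasirandom Gs"
  moreover have "tournament 16 (\<lambda>i j. i < j)"
    by (auto simp: tournament_def)
  ultimately have "(\<lambda>i. density 16 (\<lambda>i j. i < j) (fst (Gs i)) (snd (Gs i)))
      \<longlonglongrightarrow> random_density 16 (\<lambda>i j. i < j)"
    unfolding quasirandom_def by blast
  then have "\<forall>\<^sub>F i in sequentially. density 16 (\<lambda>i j. i < j) (fst (Gs i)) (snd (Gs i)) < fact 16 / 112 ^ 16"
    using random_density_order_16_lt by (rule order_tendstoD)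
  moreover have "\<forall>\<^sub>F i in sequentially. fact 16 / 112 ^ 16 \<le> density 16 (\<lambda>i j. i < j) (fst (Gs i)) (snd (Gs i))"
    using filterlim_at_top[THEN iffD1, OF assms(2), rule_format, of 112]
  proof (rule eventually_mono)
    fix i assume n: "112 \<le> fst (Gs i)"
    have "fact 16 / (7 * real 16) ^ 16 \<le> real (fst (Gs i) div 6 choose 16) / real (fst (Gs i) choose 16)"
      using n by (intro binomial_ratio_ge) auto
    also have "\<dots> \<le> density 16 (\<lambda>i j. i < j) (fst (Gs i)) (snd (Gs i))"
      using n by (intro density_order_ge_of_ordered_prefix assms(1)) auto
    finally show "fact 16 / 112 ^ 16 \<le> density 16 (\<lambda>i j. i < j) (fst (Gs i)) (snd (Gs i))"
      by simp
  qed
  ultimately have "\<forall>\<^sub>F i in sequentially. False"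
    by eventually_elim simp
  then show False
    by simp
qed

lemma not_quasirandom_forcing_if_dense_ordered_prefix:
  assumes "\<not> transitive_tournament k H" "random_density k H \<le> c"
    and dense: "\<And>n. N \<le> n \<Longrightarrow> \<exists>G. tournament n G \<and> ordered_prefix (n div 6) G \<and> c \<le> density k H n G"
  shows "\<not> quasirandom_forcing k H"
proof
  assume forcing: "quasirandom_forcing k H"
  define p where "p = random_density k H"
  define near where "near n G \<longleftrightarrow> tournament n G \<and> ordered_prefix (n div 6) G \<and>
    \<bar>density k H n G - p\<bar> \<le> k / n" for n G
  define M where "M = max k N"
  have ex: "\<exists>G. near n G" if "M \<le> n" for n
    using dense[of n] that exists_density_near[OF assms(1)] random_density_pos assms(2) order_trans
    unfolding near_def p_def M_def by (metis max.bounded_iff)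
  have near: "near (i + M) (SOME G. near (i + M) G)" for i
    by (rule someI_ex[OF ex]) simp
  define Gs where "Gs i = (i + M, SOME G. near (i + M) G)" for i
  have tournaments: "\<forall>i. tournament (fst (Gs i)) (snd (Gs i))"
    and prefixes: "\<And>i. ordered_prefix (fst (Gs i) div 6) (snd (Gs i))"
    and close: "\<And>i. \<bar>density k H (fst (Gs i)) (snd (Gs i)) - p\<bar> \<le> k / (i + M)"
    using near by (simp_all add: Gs_def near_def)
  have sizes: "filterlim (\<lambda>i. fst (Gs i)) at_top sequentially"
    by (simp add: Gs_def filterlim_add_const_nat_at_top)
  have "(\<lambda>i. real k / real (i + M)) \<longlonglongrightarrow> 0"
    using LIMSEQ_ignore_initial_segment[OF lim_const_over_n[of "real k"], of M] by simp
  then have "(\<lambda>i. density k H (fst (Gs i)) (snd (Gs i)) - p) \<longlonglongrightarrow> 0"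
    by (rule tendsto_0_le[where K = 1]) (use close in simp)
  then have "(\<lambda>i. density k H (fst (Gs i)) (snd (Gs i))) \<longlonglongrightarrow> random_density k H"
    unfolding p_def by (rule LIM_zero_cancel)
  with forcing tournaments sizes have "quasirandom Gs"
    unfolding quasirandom_forcing_def by blast
  with not_quasirandom_if_ordered_prefix[OF prefixes sizes] show False ..
qed

section \<open>Blow-ups\<close>

definition blow_up :: "(nat \<Rightarrow> nat \<Rightarrow> bool) \<Rightarrow> (nat \<Rightarrow> nat) \<Rightarrow> nat \<Rightarrow> nat \<Rightarrow> bool" where
  "blow_up H \<rho> x y \<longleftrightarrow> (if \<rho> x = \<rho> y then x < y else H (\<rho> x) (\<rho> y))"

lemma tournament_blow_up:
  assumes "tournament k H" "\<And>x. x < n \<Longrightarrow> \<rho> x < k"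
  shows "tournament n (blow_up H \<rho>)"
  unfolding tournament_def
proof (intro conjI allI impI)
  fix x y assume "x < n" "y < n" "x \<noteq> y"
  then have "\<rho> x \<noteq> \<rho> y \<Longrightarrow> H (\<rho> x) (\<rho> y) \<longleftrightarrow> \<not> H (\<rho> y) (\<rho> x)"
    using tournament_flip[OF assms(1)] assms(2) by blast
  with \<open>x \<noteq> y\<close> show "blow_up H \<rho> x y \<longleftrightarrow> \<not> blow_up H \<rho> y x"
    unfolding blow_up_def by auto
qed (simp add: blow_up_def)

lemma ordered_prefix_blow_up:
  "(\<And>x. x < a \<Longrightarrow> \<rho> x = c) \<Longrightarrow> ordered_prefix a (blow_up H \<rho>)"
  by (simp add: ordered_prefix_def blow_up_def)

lemma blow_up_embedding:
  assumes "strict_mono_on {0..<k} f" "\<And>i. i < k \<Longrightarrow> \<rho> (f i) = r i"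
    and "\<And>i j. i < k \<Longrightarrow> j < k \<Longrightarrow> r i = r j \<Longrightarrow> H i j \<longleftrightarrow> i < j"
    and "\<And>i j. i < k \<Longrightarrow> j < k \<Longrightarrow> r i \<noteq> r j \<Longrightarrow> H i j \<longleftrightarrow> H (r i) (r j)"
    and "i < k" "j < k"
  shows "H i j \<longleftrightarrow> blow_up H \<rho> (f i) (f j)"
proof (cases "r i = r j")
  case True
  then show ?thesis
    using assms(2,3,5,6) strict_mono_on_less[OF assms(1)] by (simp add: blow_up_def)
next
  case False
  then have "blow_up H \<rho> (f i) (f j) \<longleftrightarrow> H (r i) (r j)"
    using assms(2,5,6) by (simp add: blow_up_def)
  with False assms(4-6) show ?thesis
    by blast
qed

definition block :: "nat \<Rightarrow> nat \<Rightarrow> nat set" where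
  "block q i = {i * q..<Suc i * q}"

lemma div_eq_if_in_block: "x \<in> block q i \<Longrightarrow> x div q = i"
  unfolding block_def by (intro div_nat_eqI) (auto simp: mult.commute)

lemma less_if_in_blocks: "i < j \<Longrightarrow> x \<in> block q i \<Longrightarrow> y \<in> block q j \<Longrightarrow> x < y"
  unfolding block_def by (metis Suc_leI atLeastLessThan_iff less_le_trans mult_le_mono1)

lemma card_block: "card (block q i) = q"
  by (simp add: block_def)

lemma block_ge: "x \<in> block q i \<Longrightarrow> i * q \<le> x"
  by (simp add: block_def)

lemma in_block_less:
  assumes "x \<in> block q i" "i < k" "k * q \<le> n"
  shows "x < n"
proof -
  have "Suc i * q \<le> k * q"
    using assms(2) by (intro mult_le_mono1) simp
  with assms(1,3) show ?thesis
    by (simp add: block_def)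
qed

lemma card_copies_balanced_blow_up:
  assumes "tournament k H" "k * q \<le> n"
  shows "q ^ k \<le> card (copies k H n (blow_up H (\<lambda>x. min (k - 1) (x div q))))"
proof -
  have "q ^ k = card (\<Pi>\<^sub>E i\<in>{0..<k}. block q i)"
    by (simp add: card_PiE card_block)
  also have "\<dots> \<le> card (copies k H n (blow_up H (\<lambda>x. min (k - 1) (x div q))))"
  proof (rule card_strict_mono_embeddings_le_card_copies)
    fix f assume f: "f \<in> (\<Pi>\<^sub>E i\<in>{0..<k}. block q i)"
    then have f_block: "i < k \<Longrightarrow> f i \<in> block q i" for i
      by auto
    then have label: "i < k \<Longrightarrow> min (k - 1) (f i div q) = i" for i
      using div_eq_if_in_block by fastforce
    show "strict_mono_on {0..<k} f \<and> f ` {0..<k} \<subseteq> {0..<n} \<and>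
      (\<forall>i<k. \<forall>j<k. H i j = blow_up H (\<lambda>x. min (k - 1) (x div q)) (f i) (f j))"
    proof (intro conjI allI impI)
      show "strict_mono_on {0..<k} f"
      proof (rule strict_mono_onI)
        fix r s assume "r \<in> {0..<k}" "s \<in> {0..<k}" "r < s"
        then show "f r < f s"
          using less_if_in_blocks[OF \<open>r < s\<close> f_block f_block] by simp
      qed
      show "f ` {0..<k} \<subseteq> {0..<n}"
        using f_block in_block_less assms(2) by fastforce
      fix i j assume "i < k" "j < k"
      with \<open>strict_mono_on {0..<k} f\<close> label tournament_irrefl[OF assms(1)]
      show "H i j = blow_up H (\<lambda>x. min (k - 1) (x div q)) (f i) (f j)"
        by (intro blow_up_embedding[where r = id]) auto
    qed
  qed (auto simp: PiE_iff)
  finally show ?thesis .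
qed

lemma twins_sym: "twins k H u v \<Longrightarrow> twins k H v u"
  unfolding twins_def by blast

lemma twins_arcs_eq:
  assumes "tournament k H" "twins k H u v" "w < k" "w \<noteq> u" "w \<noteq> v"
  shows "H u w \<longleftrightarrow> H v w" and "H w u \<longleftrightarrow> H w v"
proof -
  show out: "H u w \<longleftrightarrow> H v w"
    using assms(2-5) unfolding twins_def by blast
  have "H w u \<longleftrightarrow> \<not> H u w" "H w v \<longleftrightarrow> \<not> H v w"
    using assms tournament_flip[OF assms(1)] unfolding twins_def by blast+
  with out show "H w u \<longleftrightarrow> H w v"
    by simp
qed

lemma tournament_relabel:
  assumes "\<sigma> permutes {0..<k}" "tournament k H"
  shows "tournament k (\<lambda>i j. H (\<sigma> i) (\<sigma> j))"
proof -
  have "\<sigma> i < k \<longleftrightarrow> i < k" and "\<sigma> i = \<sigma> j \<longleftrightarrow> i = j" for i j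
    using permutes_in_image[OF assms(1)] permutes_inj[OF assms(1)] by (auto simp: inj_eq)
  then show ?thesis
    using tournament_irrefl[OF assms(2)] tournament_flip[OF assms(2)]
    unfolding tournament_def by metis
qed

lemma twins_relabel:
  assumes "\<sigma> permutes {0..<k}" "twins k H (\<sigma> u) (\<sigma> v)"
  shows "twins k (\<lambda>i j. H (\<sigma> i) (\<sigma> j)) u v"
  using assms(2) permutes_in_image[OF assms(1)] permutes_inj[OF assms(1)]
  unfolding twins_def by (simp add: inj_eq)

lemma ex_twins_arc:
  assumes "tournament k H" "has_twins k H"
  obtains u v where "twins k H u v" "H u v"
proof -
  obtain u v where uv: "twins k H u v"
    using assms(2) unfolding has_twins_def by blast
  then have "H u v \<or> H v u"
    using tournament_flip[OF assms(1)] unfolding twins_def by blast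
  with uv twins_sym that show ?thesis
    by blast
qed

lemma ex_permutes_pair:
  fixes a b u v k :: nat
  assumes "a < k" "b < k" "a \<noteq> b" "u < k" "v < k" "u \<noteq> v"
  shows "\<exists>\<sigma>. \<sigma> permutes {0..<k} \<and> \<sigma> a = u \<and> \<sigma> b = v"
proof -
  define w where "w = Transposition.transpose a u v"
  have "w \<noteq> a" "w < k"
    using assms by (auto simp: w_def transpose_def)
  then show ?thesis
    using assms
    by (intro exI[of _ "Transposition.transpose a u \<circ> Transposition.transpose b w"])
       (auto simp: w_def transpose_def intro!: permutes_compose permutes_swap_id)
qed

lemma twin_quotient_arcs:
  assumes "tournament k H" "twins k H 0 1" "H 0 1" "i < k" "j < k"
  defines "r \<equiv> \<lambda>i::nat. if i < 2 then 0 else i"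
  shows "r i = r j \<Longrightarrow> H i j \<longleftrightarrow> i < j"
    and "r i \<noteq> r j \<Longrightarrow> H i j \<longleftrightarrow> H (r i) (r j)"
proof -
  have "1 < k"
    using assms(2) by (simp add: twins_def)
  have "\<not> H 1 0"
    using tournament_flip[OF assms(1), of 0 1] \<open>1 < k\<close> assms(3) by simp
  then show "r i = r j \<Longrightarrow> H i j \<longleftrightarrow> i < j"
    using tournament_irrefl[OF assms(1)] assms(3-5) unfolding r_def
    by (cases "i < 2"; cases "j < 2") (auto simp: less_2_cases_iff)
  show "r i \<noteq> r j \<Longrightarrow> H i j \<longleftrightarrow> H (r i) (r j)"
    using twins_arcs_eq[OF assms(1,2)] assms(4,5) unfolding r_def
    by (cases "i < 2"; cases "j < 2") (auto simp: less_2_cases_iff)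
qed

(* Letting the twins range over all pairs of the merged block gives about 2 q^k embeddings,
   twice the balanced count. *)
definition twin_embeddings :: "nat \<Rightarrow> nat \<Rightarrow> (nat \<Rightarrow> nat) set" where
  "twin_embeddings k q = (\<lambda>((y, x), g). g(0 := x, 1 := y)) `
     ((SIGMA y:{0..<2 * q}. {0..<y}) \<times> (\<Pi>\<^sub>E i\<in>{2..<k}. block q i))"

lemma card_twin_embeddings: "card (twin_embeddings k q) = q * (2 * q - 1) * q ^ (k - 2)"
proof -
  have "x = x' \<and> y = y' \<and> g = g'"
    if "g \<in> extensional {2..<k}" "g' \<in> extensional {2..<k}" "g(0 := x, 1 := y) = g'(0 := x', 1 := y')"
    for x y x' y' and g g' :: "nat \<Rightarrow> nat"
  proof (intro conjI)
    show "x = x'" "y = y'"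
      using fun_cong[OF that(3), of 0] fun_cong[OF that(3), of 1] by simp_all
    show "g = g'"
    proof (rule extensionalityI[OF that(1,2)])
      fix i assume "i \<in> {2..<k}"
      then show "g i = g' i"
        using fun_cong[OF that(3), of i] by simp
    qed
  qed
  then have "inj_on (\<lambda>((y, x), g). g(0 := x, 1 := y))
      ((SIGMA y:{0..<2 * q}. {0..<y}) \<times> (\<Pi>\<^sub>E i\<in>{2..<k}. block q i))"
    unfolding inj_on_def by (auto simp: PiE_def)
  moreover have "card (SIGMA y:{0..<2 * q}. {0..<y}) = q * (2 * q - 1)"
    by (simp add: Sum_Ico_nat)
  ultimately show ?thesis
    unfolding twin_embeddings_def by (simp add: card_image card_cartesian_product card_PiE card_block)
qed

lemma twin_embeddingD:
  assumes "f \<in> twin_embeddings k q" "1 < k"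
  shows "f \<in> extensional {0..<k}" "f 0 < f 1" "f 1 < 2 * q"
    and "2 \<le> i \<Longrightarrow> i < k \<Longrightarrow> f i \<in> block q i"
proof -
  from assms(1) obtain x y g where "x < y" "y < 2 * q" "g \<in> (\<Pi>\<^sub>E i\<in>{2..<k}. block q i)"
    and f: "f = g(0 := x, 1 := y)"
    unfolding twin_embeddings_def by auto
  with assms(2) show "f \<in> extensional {0..<k}" "f 0 < f 1" "f 1 < 2 * q"
    and "2 \<le> i \<Longrightarrow> i < k \<Longrightarrow> f i \<in> block q i"
    by (auto simp: PiE_def extensional_def)
qed

lemma strict_mono_on_twin_embedding:
  assumes "f \<in> twin_embeddings k q" "1 < k"
  shows "strict_mono_on {0..<k} f"
proof (rule strict_mono_onI)
  note f = twin_embeddingD[OF assms]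
  fix i j assume "i \<in> {0..<k}" "j \<in> {0..<k}" "i < j"
  then consider "i = 0" "j = 1" | "i < 2" "2 \<le> j" "j < k" | "2 \<le> i" "j < k"
    by fastforce
  then show "f i < f j"
  proof cases
    case 2
    then have "f i < 2 * q"
      using f(2,3) by (auto simp: less_2_cases_iff)
    moreover have "2 * q \<le> j * q" "j * q \<le> f j"
      using 2 block_ge[OF f(4)] by (simp_all add: mult_le_mono1)
    ultimately show ?thesis
      by linarith
  next
    case 3
    with \<open>i < j\<close> show ?thesis
      using less_if_in_blocks[OF \<open>i < j\<close> f(4) f(4)] by simp
  qed (use f(2) in simp)
qed

lemma card_copies_twin_blow_up:
  assumes H: "tournament k H" "twins k H 0 1" "H 0 1" and "k * q \<le> n"
  shows "q * (2 * q - 1) * q ^ (k - 2) \<le>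
    card (copies k H n (blow_up H (\<lambda>x. if x < 2 * q then 0 else min (k - 1) (x div q))))"
  unfolding card_twin_embeddings[symmetric]
proof (rule card_strict_mono_embeddings_le_card_copies)
  have "1 < k"
    using H(2) by (simp add: twins_def)
  then show "twin_embeddings k q \<subseteq> extensional {0..<k}"
    using twin_embeddingD(1) by blast
  fix f assume "f \<in> twin_embeddings k q"
  note f = twin_embeddingD[OF this \<open>1 < k\<close>] strict_mono_on_twin_embedding[OF this \<open>1 < k\<close>]
  have low: "f i < 2 * q" if "i < 2" for i
    using f(2,3) that by (auto simp: less_2_cases_iff)
  have high: "f i div q = i" "2 * q \<le> f i" if "2 \<le> i" "i < k" for i
  proof -
    show "f i div q = i"
      using f(4)[OF that] by (rule div_eq_if_in_block)
    have "2 * q \<le> i * q" "i * q \<le> f i"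
      using that block_ge[OF f(4)[OF that]] by (simp_all add: mult_le_mono1)
    then show "2 * q \<le> f i"
      by linarith
  qed
  have "f i < n" if "i < k" for i
  proof (cases "i < 2")
    case True
    have "2 * q \<le> n"
      using \<open>1 < k\<close> assms(4) mult_le_mono1[of 2 k q] by linarith
    with low[OF True] show ?thesis
      by linarith
  next
    case False
    with that show ?thesis
      using in_block_less[OF f(4) that assms(4)] by simp
  qed
  moreover have "(if f i < 2 * q then 0 else min (k - 1) (f i div q)) = (if i < 2 then 0 else i)"
    if "i < k" for i
    using low[of i] high[of i] that by (cases "i < 2") auto
  with f(5) twin_quotient_arcs[OF H]
  have "H i j \<longleftrightarrow> blow_up H (\<lambda>x. if x < 2 * q then 0 else min (k - 1) (x div q)) (f i) (f j)"
    if "i < k" "j < k" for i j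
    using that by (intro blow_up_embedding[where r = "\<lambda>i. if i < 2 then 0 else i"]) auto
  ultimately show "strict_mono_on {0..<k} f \<and> f ` {0..<k} \<subseteq> {0..<n} \<and>
      (\<forall>i<k. \<forall>j<k. H i j = blow_up H (\<lambda>x. if x < 2 * q then 0 else min (k - 1) (x div q)) (f i) (f j))"
    using f(5) by auto
qed

section \<open>Six-vertex tournaments with twins or symmetries\<close>

lemma dense_balanced_blow_up:
  assumes "tournament 6 H" "105 \<le> n"
  shows "\<exists>G. tournament n G \<and> ordered_prefix (n div 6) G \<and> 360 / 2 ^ 15 \<le> density 6 H n G"
proof -
  define q where "q = n div 6"
  define G where "G = blow_up H (\<lambda>x. min 5 (x div q))"
  have "tournament n G"
    unfolding G_def by (rule tournament_blow_up[OF assms(1)]) simp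
  moreover have "ordered_prefix (n div 6) G"
    unfolding G_def q_def by (rule ordered_prefix_blow_up[where c = 0]) simp
  moreover have "720 * real (q ^ 6) / real n ^ 6 \<le> density 6 H n G"
    using density_ge_card_copies[OF card_copies_balanced_blow_up[OF assms(1), of q n]] assms(2)
    by (simp add: G_def q_def fact_numeral)
  moreover have "360 / 2 ^ 15 \<le> 720 * real (q ^ 6) / real n ^ 6"
  proof -
    have "real n \<le> 63 / 10 * real q"
      using assms(2) unfolding q_def by linarith
    then have "real n ^ 6 \<le> (63 / 10 * real q) ^ 6"
      by (rule power_mono) simp
    also have "\<dots> = (63 / 10) ^ 6 * real q ^ 6"
      by (simp only: power_mult_distrib)
    also have "\<dots> \<le> 2 ^ 16 * real q ^ 6"
      by (intro mult_right_mono) (simp_all add: power_divide)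
    finally show ?thesis
      using assms(2) by (simp add: field_simps)
  qed
  ultimately show ?thesis
    by (meson order_trans)
qed

lemma dense_twin_blow_up:
  assumes "tournament 6 H" "has_twins 6 H" "400 \<le> n"
  shows "\<exists>G. tournament n G \<and> ordered_prefix (n div 6) G \<and> 720 / 2 ^ 15 \<le> density 6 H n G"
proof -
  obtain u v where uv: "twins 6 H u v" "H u v"
    using ex_twins_arc[OF assms(1,2)] .
  then obtain \<sigma> where \<sigma>: "\<sigma> permutes {0..<6}" "\<sigma> 0 = u" "\<sigma> 1 = v"
    using ex_permutes_pair[of 0 6 1 u v] unfolding twins_def by auto
  define H' where "H' = (\<lambda>i j. H (\<sigma> i) (\<sigma> j))"
  have H': "tournament 6 H'" "twins 6 H' 0 1" "H' 0 1"
    using tournament_relabel[OF \<sigma>(1) assms(1)] twins_relabel[OF \<sigma>(1)] uv \<sigma>(2,3)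
    by (simp_all add: H'_def)
  define q where "q = n div 6"
  define G where "G = blow_up H' (\<lambda>x. if x < 2 * q then 0 else min 5 (x div q))"
  have "(if x < 2 * q then 0 else min 5 (x div q)) < 6" for x
    by (simp add: min_less_iff_disj)
  then have "tournament n G"
    unfolding G_def by (intro tournament_blow_up[OF H'(1)])
  moreover have "ordered_prefix (n div 6) G"
    unfolding G_def q_def by (rule ordered_prefix_blow_up[where c = 0]) simp
  moreover have relabel: "density 6 H n G = density 6 H' n G"
    using assms(3) copies_relabel[OF \<sigma>(1)] by (simp add: H'_def density_eq_card_copies)
  moreover have count: "720 * real (q * (2 * q - 1) * q ^ 4) / real n ^ 6 \<le> density 6 H' n G"
  proof -
    have six: "(6::nat) - 1 = 5"
      by simp
    have "q * (2 * q - 1) * q ^ 4 \<le> card (copies 6 H' n G)"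
      using card_copies_twin_blow_up[OF H', of q n, unfolded six] by (simp add: G_def q_def)
    from density_ge_card_copies[OF this] assms(3) show ?thesis
      by (simp add: fact_numeral)
  qed
  moreover have numeric: "720 / 2 ^ 15 \<le> 720 * real (q * (2 * q - 1) * q ^ 4) / real n ^ 6"
  proof -
    have "real n \<le> 61 / 10 * real q" "10 \<le> q"
      using assms(3) unfolding q_def by linarith+
    have "real n ^ 6 \<le> (61 / 10 * real q) ^ 6"
      using \<open>real n \<le> 61 / 10 * real q\<close> by (rule power_mono) simp
    also have "\<dots> = (61 / 10) ^ 6 * real q ^ 6"
      by (simp only: power_mult_distrib)
    also have "\<dots> \<le> 2 ^ 15 * (19 / 10) * real q ^ 6"
      by (intro mult_right_mono) (simp_all add: power_divide)
    also have "\<dots> = 2 ^ 15 * (19 / 10 * real q ^ 6)"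
      by (rule mult.assoc)
    also have "\<dots> \<le> 2 ^ 15 * real (q * (2 * q - 1) * q ^ 4)"
    proof (rule mult_left_mono)
      have "19 / 10 * real q ^ 6 = real q ^ 5 * (19 / 10 * real q)"
        by algebra
      also have "\<dots> \<le> real q ^ 5 * (2 * real q - 1)"
        using \<open>10 \<le> q\<close> by (intro mult_left_mono) auto
      also have "\<dots> = real (q * (2 * q - 1) * q ^ 4)"
        using \<open>10 \<le> q\<close> by (simp add: of_nat_diff) algebra
      finally show "19 / 10 * real q ^ 6 \<le> real (q * (2 * q - 1) * q ^ 4)" .
    qed simp
    finally show ?thesis
      using assms(3) by (simp add: field_simps)
  qed
  moreover have "720 / 2 ^ 15 \<le> density 6 H n G"
    unfolding relabel using numeric count by (rule order_trans)
  ultimately show ?thesis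
    by blast
qed

theorem proposition3p2:
  fixes H :: "nat \<Rightarrow> nat \<Rightarrow> bool"
  assumes "tournament 6 H"
    and "\<not> transitive_tournament 6 H"
    and "has_twins 6 H \<or> has_nontrivial_automorphism 6 H"
  shows "\<not> quasirandom_forcing 6 H"
proof -
  have "6 choose 2 = (15::nat)"
    by (simp add: choose_two)
  from assms(3) show ?thesis
  proof
    assume twins: "has_twins 6 H"
    have "random_density 6 H \<le> 720 / 2 ^ 15"
      using random_density_le[of 1 6 H] card_automorphisms_pos[of 6 H] \<open>6 choose 2 = 15\<close>
      by (simp add: fact_numeral Suc_le_eq)
    then show ?thesis
      by (rule not_quasirandom_forcing_if_dense_ordered_prefix[OF assms(2) _ dense_twin_blow_up[OF assms(1) twins]])
  next
    assume "has_nontrivial_automorphism 6 H"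
    then have "random_density 6 H \<le> 360 / 2 ^ 15"
      using random_density_le[of 2 6 H] card_automorphisms_ge_2 \<open>6 choose 2 = 15\<close>
      by (simp add: fact_numeral)
    then show ?thesis
      by (rule not_quasirandom_forcing_if_dense_ordered_prefix[OF assms(2) _ dense_balanced_blow_up[OF assms(1)]])
  qed
qed

end
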